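(* Let $G$ be a finite simple graph with edge weight function $w$ and vertex weight function $w_1$, let $u\in V(G)$ and let $\theta$ be a real number. Then $$\mathrm{mult}(\theta,G)-1\le \mathrm{mult}(\theta,G\setminus u)\le \mathrm{mult}(\theta,G)+1.$$
   Context: An edge weight function $w$ assigns a nonzero complex number to each edge; a vertex weight function $w_1$ assigns a real number (possibly $0$) to each vertex; subgraphs carry restricted weights; $G\setminus u$ deletes $u$ and its incident edges. For $A\subseteq E(G)$, $w(A)=\prod_{e\in A}w(e)$. $\mu_w(G,x)=\sum_{M}(-1)^{|M|}|w(M)|^2x^{n-2|M|}$ over all matchings $M$ (including empty). $\eta_{(w,w_1)}(G,x)=\sum_{S\subseteq V(G)}(-1)^{|V(G)\setminus S|}\big(\prod_{v\in V(G)\setminus S}w_1(v)\big)\mu_w(G[S],x)$ with $G[S]$ the induced subgraph; $\mu_w,\eta_{(w,w_1)}$ of the empty graph equal $1$. $\mathrm{mult}(\theta,H)$ is the multiplicity of $\theta$ as a root of $\eta_{(w,w_1)}(H,x)$ ($0$ if not a root). *)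

theory Defs
  imports Complex_Main "HOL-Computational_Algebra.Polynomial"
begin

definition simple_graph :: "'a set \<Rightarrow> 'a set set \<Rightarrow> bool" where
  "simple_graph V E \<longleftrightarrow> finite V \<and> (\<forall>e\<in>E. e \<subseteq> V \<and> card e = 2)"

definition matching :: "'a set set \<Rightarrow> 'a set set \<Rightarrow> bool" where
  "matching E M \<longleftrightarrow> M \<subseteq> E \<and> (\<forall>e\<in>M. \<forall>f\<in>M. e \<noteq> f \<longrightarrow> e \<inter> f = {})"

definition induced_edges :: "'a set set \<Rightarrow> 'a set \<Rightarrow> 'a set set" where
  "induced_edges E S = {e\<in>E. e \<subseteq> S}"

definition delete_vertex_edges :: "'a set set \<Rightarrow> 'a \<Rightarrow> 'a set set" where
  "delete_vertex_edges E u = {e\<in>E. u \<notin> e}"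

definition mu_poly :: "'a set \<Rightarrow> 'a set set \<Rightarrow> ('a set \<Rightarrow> complex) \<Rightarrow> real poly" where
  "mu_poly V E w = (\<Sum>M\<in>{M. matching E M}.
     smult ((-1) ^ card M * (\<Prod>e\<in>M. cmod (w e)) ^ 2) (monom 1 (card V - 2 * card M)))"

definition eta_poly :: "'a set \<Rightarrow> 'a set set \<Rightarrow> ('a set \<Rightarrow> complex) \<Rightarrow> ('a \<Rightarrow> real) \<Rightarrow> real poly" where
  "eta_poly V E w w1 = (\<Sum>S\<in>Pow V.
     smult ((-1) ^ card (V - S) * (\<Prod>v\<in>V - S. w1 v)) (mu_poly S (induced_edges E S) w))"

definition mult :: "real \<Rightarrow> 'a set \<Rightarrow> 'a set set \<Rightarrow> ('a set \<Rightarrow> complex) \<Rightarrow> ('a \<Rightarrow> real) \<Rightarrow> nat" where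
  "mult \<theta> V E w w1 = order \<theta> (eta_poly V E w w1)"

end

theory Submission
  imports Defs
begin

text \<open>Expanding \<open>\<eta>\<close> along \<open>u\<close> gives the recurrence
  \<open>\<eta>(G) = (x - w1(u)) \<eta>(G - u) - (\<Sum>v adjacent to u. |w(uv)|^2 \<eta>(G - u - v))\<close>.
  The Wronskian \<open>W(G, u) = \<eta>(G - u) \<eta>(G)' - \<eta>(G) \<eta>(G - u)'\<close> inherits the recurrence
  \<open>W(G, u) = \<eta>(G - u)^2 + (\<Sum>v adjacent to u. |w(uv)|^2 W(G - u, v))\<close>, so by induction it is
  a nonnegative function. If \<open>\<theta>\<close> had multiplicity \<open>k\<close> in \<open>\<eta>(G - u)\<close> and at least \<open>k + 2\<close>
  in \<open>\<eta>(G)\<close>, then \<open>(x - \<theta>)^(2k+1)\<close> would divide \<open>W(G, u)\<close>, i.e. a square of exact order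
  \<open>2k\<close> at \<open>\<theta>\<close> plus a nonnegative function, which is impossible. Conversely, this bound
  applied to the vertices \<open>v\<close> of \<open>G - u\<close> shows that \<open>(x - \<theta>)^(k-1)\<close> divides every term on
  the right of the recurrence, hence \<open>\<eta>(G)\<close>.\<close>

lemma smult_sum_right: "smult a (\<Sum>i\<in>S. f i) = (\<Sum>i\<in>S. smult a (f i))"
  by (induction S rule: infinite_finite_induct) (auto simp: smult_add_right)

lemma pderiv_sum: "pderiv (\<Sum>i\<in>S. f i) = (\<Sum>i\<in>S. pderiv (f i))"
  by (induction S rule: infinite_finite_induct) (auto simp: pderiv_add)

lemma power_dvd_pderiv:
  fixes q :: "'a::idom poly"
  assumes "p ^ n dvd q"
  shows "p ^ (n - 1) dvd pderiv q"
proof -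
  obtain h where h: "q = p ^ n * h" using assms by (rule dvdE)
  have "p ^ (n - 1) dvd pderiv (p ^ n)"
  proof (cases n)
    case (Suc m)
    then show ?thesis by (simp add: pderiv_power_Suc dvd_smult del: power_Suc)
  qed simp
  moreover have "p ^ (n - 1) dvd p ^ n" by (rule le_imp_power_dvd) simp
  ultimately show ?thesis unfolding h pderiv_mult by simp
qed

lemma not_power_dvd_square_plus_nonneg:
  fixes f R :: "real poly"
  assumes "f \<noteq> 0" and R: "\<And>x. poly R x \<ge> 0"
  shows "\<not> [:-t,1:] ^ (2 * order t f + 1) dvd f^2 + R"
proof
  define p where "p = [:-t,1:]"
  define k where "k = order t f"
  obtain f1 where f: "f = p ^ k * f1" and "\<not> p dvd f1"
    using order_decomp[OF assms(1), of t] by (auto simp: k_def p_def)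
  then have f1: "poly f1 t \<noteq> 0" by (simp add: poly_eq_0_iff_dvd p_def)
  assume "[:-t,1:] ^ (2 * order t f + 1) dvd f^2 + R"
  then obtain h where h: "f^2 + R = p ^ (2*k+1) * h" unfolding k_def p_def by (rule dvdE)
  \<comment> \<open>\<open>F = R / p^(2k)\<close> is nonnegative away from \<open>t\<close>, yet \<open>F(t) = -f1(t)^2 < 0\<close>.\<close>
  define F where "F = p * h - f1^2"
  have "R = p ^ (2*k+1) * h - f^2" using h by (simp add: algebra_simps)
  also have "\<dots> = p^(2*k) * F" unfolding F_def f
    by (simp add: algebra_simps power_add power_mult[symmetric] mult.commute[of 2 k])
  finally have RF: "R = p^(2*k) * F" .
  have "poly F x \<ge> 0" if "x \<noteq> t" for x
  proof -
    have "poly (p^(2*k)) x > 0" using that by (simp add: p_def power_mult)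
    then show ?thesis using R[of x] unfolding RF by (simp add: zero_le_mult_iff)
  qed
  then have nonneg_near: "eventually (\<lambda>x. poly F x \<ge> 0) (at t)"
    by (auto simp: eventually_at_filter intro: always_eventually)
  have "(poly F \<longlongrightarrow> poly F t) (at t)"
    using poly_isCont[where p=F and x=t] by (simp add: isCont_def)
  then have "poly F t \<ge> 0"
    using tendsto_lowerbound[OF _ nonneg_near] by simp
  moreover have "poly F t < 0" using f1 by (simp add: F_def p_def)
  ultimately show False by simp
qed

lemma inj_on_insert_Pow: "a \<notin> A \<Longrightarrow> inj_on (insert a) (Pow A)"
  by (rule inj_onI) (metis Pow_iff insert_ident subsetD)

lemma sum_Pow_insert:
  assumes "finite A" "a \<notin> A"
  shows "(\<Sum>S\<in>Pow (insert a A). f S) = (\<Sum>S\<in>Pow A. f S) + (\<Sum>S\<in>Pow A. f (insert a S))"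
proof -
  have "Pow A \<inter> insert a ` Pow A = {}" using assms(2) by auto
  then show ?thesis
    unfolding Pow_insert using assms by (simp add: sum.union_disjoint sum.reindex inj_on_insert_Pow)
qed

lemma Pow_containing_eq_image:
  assumes "a \<in> A"
  shows "{S\<in>Pow A. a \<in> S} = insert a ` Pow (A - {a})"
proof (intro equalityI subsetI)
  fix S assume "S \<in> {S\<in>Pow A. a \<in> S}"
  then have "S = insert a (S - {a})" "S - {a} \<in> Pow (A - {a})" by auto
  then show "S \<in> insert a ` Pow (A - {a})" by (rule image_eqI)
qed (use assms in auto)

lemma sum_Pow_containing:
  assumes "a \<in> A"
  shows "(\<Sum>S\<in>{S\<in>Pow A. a \<in> S}. f S) = (\<Sum>S\<in>Pow (A - {a}). f (insert a S))"
  unfolding Pow_containing_eq_image[OF assms] by (simp add: sum.reindex inj_on_insert_Pow)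

lemma finite_induced_edges: "finite S \<Longrightarrow> finite (induced_edges E S)"
  by (rule finite_subset[of _ "Pow S"]) (auto simp: induced_edges_def)

lemma finite_matchings: "finite F \<Longrightarrow> finite {M. matching F M}"
  by (rule finite_subset[of _ "Pow F"]) (auto simp: matching_def)

lemma matching_card_le:
  assumes "finite S" "\<forall>e\<in>E. card e = 2" "matching (induced_edges E S) M"
  shows "2 * card M \<le> card S"
proof -
  have M: "M \<subseteq> induced_edges E S" using assms(3) by (auto simp: matching_def)
  have "card (\<Union>M) = sum card M"
    by (rule card_Union_disjoint)
      (use assms M in \<open>auto simp: matching_def pairwise_def disjnt_def induced_edges_def
         intro: finite_subset[of _ S]\<close>)
  also have "\<dots> = 2 * card M" using M assms(2) by (simp add: induced_edges_def subset_iff)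
  finally show ?thesis
    using card_mono[OF assms(1), of "\<Union>M"] M by (auto simp: induced_edges_def)
qed

definition matching_term :: "nat \<Rightarrow> ('a set \<Rightarrow> complex) \<Rightarrow> 'a set set \<Rightarrow> real poly" where
  "matching_term n w M = smult ((-1) ^ card M * (\<Prod>e\<in>M. cmod (w e)) ^ 2) (monom 1 (n - 2 * card M))"

lemma mu_poly_eq_sum_matching_term:
  "mu_poly S F w = (\<Sum>M\<in>{M. matching F M}. matching_term (card S) w M)"
  by (simp add: mu_poly_def matching_term_def)

lemma matching_term_Suc:
  assumes "2 * card M \<le> n"
  shows "matching_term (Suc n) w M = [:0,1:] * matching_term n w M"
proof -
  have "Suc n - 2 * card M = Suc (n - 2 * card M)" using assms by linarith
  then show ?thesis by (simp add: matching_term_def monom_Suc)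
qed

lemma matching_term_insert:
  assumes "finite M" "e \<notin> M"
  shows "matching_term (Suc (Suc n)) w (insert e M) = - smult ((cmod (w e))^2) (matching_term n w M)"
  using assms by (simp add: matching_term_def algebra_simps)

lemma matchings_split_at_vertex:
  assumes "u \<in> S" "\<forall>e\<in>E. card e = 2"
  shows "{M. matching (induced_edges E S) M} =
      {M. matching (induced_edges E (S - {u})) M}
    \<union> (\<Union>v\<in>{v\<in>S - {u}. {u,v} \<in> E}.
         insert {u,v} ` {M. matching (induced_edges E (S - {u} - {v})) M})"
    (is "?Ms = ?A \<union> ?B")
proof (intro set_eqI iffI)
  fix M assume M: "M \<in> ?Ms"
  show "M \<in> ?A \<union> ?B"
  proof (cases "\<exists>e\<in>M. u \<in> e")
    case False
    then show ?thesis using M by (auto simp: matching_def induced_edges_def)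
  next
    case True
    then obtain e where e: "e \<in> M" "u \<in> e" by blast
    have eE: "e \<in> E" "e \<subseteq> S" using e M by (auto simp: matching_def induced_edges_def)
    have "card (e - {u}) = 1" using assms(2) eE(1) e(2) by (simp add: card_Diff_singleton)
    then obtain v where "e - {u} = {v}" by (rule card_1_singletonE)
    then have v: "e = {u,v}" "v \<noteq> u" using e(2) by blast+
    have "f \<inter> e = {}" if "f \<in> M - {e}" for f
      using M e(1) that by (auto simp: matching_def)
    then have "M - {e} \<in> {M. matching (induced_edges E (S - {u} - {v})) M}"
      using M unfolding v(1) by (auto simp: matching_def induced_edges_def)
    moreover have "v \<in> S - {u}" "{u,v} \<in> E" using eE v by auto
    moreover have "M = insert {u,v} (M - {e})" using e(1) v(1) by auto
    ultimately show ?thesis by blast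
  qed
next
  fix M assume "M \<in> ?A \<union> ?B"
  then show "M \<in> ?Ms"
    using assms(1) by (auto simp: matching_def induced_edges_def)
qed

lemma sum_matching_term_insert_edge:
  assumes "finite S" "u \<in> S" "v \<in> S" "u \<noteq> v"
  shows "(\<Sum>M\<in>insert {u,v} ` {M. matching (induced_edges E (S - {u} - {v})) M}. matching_term (card S) w M)
    = - smult ((cmod (w {u,v}))^2) (mu_poly (S - {u} - {v}) (induced_edges E (S - {u} - {v})) w)"
proof -
  define B where "B = {M. matching (induced_edges E (S - {u} - {v})) M}"
  have avoids: "finite M \<and> {u,v} \<notin> M" if "M \<in> B" for M
    using that finite_matchings[OF finite_induced_edges, of "S - {u} - {v}" E] assms(1)
    by (auto simp: B_def matching_def induced_edges_def intro: finite_subset)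
  then have "inj_on (insert {u,v}) B"
    unfolding inj_on_def by (metis insert_ident)
  then have "(\<Sum>M\<in>insert {u,v} ` B. matching_term (card S) w M)
      = (\<Sum>M\<in>B. matching_term (Suc (Suc (card (S - {u} - {v})))) w (insert {u,v} M))"
    using assms card_Suc_Diff1[OF assms(1,2)] card_Suc_Diff1[of "S - {u}" v] by (simp add: sum.reindex)
  also have "\<dots> = (\<Sum>M\<in>B. - smult ((cmod (w {u,v}))^2) (matching_term (card (S - {u} - {v})) w M))"
    using avoids by (intro sum.cong refl) (simp add: matching_term_insert)
  also have "\<dots> = - smult ((cmod (w {u,v}))^2) (mu_poly (S - {u} - {v}) (induced_edges E (S - {u} - {v})) w)"
    by (simp add: B_def mu_poly_eq_sum_matching_term smult_sum_right sum_negf)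
  finally show ?thesis unfolding B_def .
qed

lemma mu_poly_vertex_recurrence:
  assumes fin: "finite S" and u: "u \<in> S" and E2: "\<forall>e\<in>E. card e = 2"
  shows "mu_poly S (induced_edges E S) w =
    [:0,1:] * mu_poly (S - {u}) (induced_edges E (S - {u})) w
    - (\<Sum>v\<in>{v\<in>S - {u}. {u,v} \<in> E}. smult ((cmod (w {u,v}))^2)
          (mu_poly (S - {u} - {v}) (induced_edges E (S - {u} - {v})) w))"
proof -
  define N where "N = {v\<in>S - {u}. {u,v} \<in> E}"
  define A where "A = {M. matching (induced_edges E (S - {u})) M}"
  define B where "B v = {M. matching (induced_edges E (S - {u} - {v})) M}" for v
  define t where "t = matching_term (card S) w"
  have fin_A: "finite A" and fin_B: "finite (B v)" for v
    unfolding A_def B_def using fin by (auto intro: finite_matchings finite_induced_edges)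
  have disjoint: "A \<inter> (\<Union>v\<in>N. insert {u,v} ` B v) = {}"
    by (auto simp: A_def matching_def induced_edges_def)
  have pairwise_disjoint: "insert {u,v} ` B v \<inter> insert {u,v'} ` B v' = {}"
    if "v \<noteq> v'" for v v'
  proof -
    have "{u,v'} \<notin> insert {u,v} M" if "M \<in> B v" for M
      using that \<open>v \<noteq> v'\<close> by (auto simp: B_def matching_def induced_edges_def doubleton_eq_iff)
    then show ?thesis
      by (auto simp: image_iff) (metis insert_iff)
  qed
  have "mu_poly S (induced_edges E S) w = (\<Sum>M\<in>A \<union> (\<Union>v\<in>N. insert {u,v} ` B v). t M)"
    unfolding mu_poly_eq_sum_matching_term t_def
    using matchings_split_at_vertex[OF u E2] by (simp add: A_def B_def N_def)
  also have "\<dots> = (\<Sum>M\<in>A. t M) + (\<Sum>M\<in>(\<Union>v\<in>N. insert {u,v} ` B v). t M)"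
    by (rule sum.union_disjoint) (use fin_A fin_B fin disjoint in \<open>auto simp: N_def\<close>)
  also have "(\<Sum>M\<in>(\<Union>v\<in>N. insert {u,v} ` B v). t M) = (\<Sum>v\<in>N. \<Sum>M\<in>insert {u,v} ` B v. t M)"
    by (rule sum.UNION_disjoint) (simp_all add: fin fin_B N_def pairwise_disjoint)
  also have "(\<Sum>M\<in>A. t M) = [:0,1:] * mu_poly (S - {u}) (induced_edges E (S - {u})) w"
    unfolding mu_poly_eq_sum_matching_term sum_distrib_left A_def t_def
    using fin E2 card_Suc_Diff1[OF fin u, symmetric]
    by (intro sum.cong refl) (simp add: matching_card_le matching_term_Suc)
  also have "(\<Sum>v\<in>N. \<Sum>M\<in>insert {u,v} ` B v. t M) = (\<Sum>v\<in>N. - smult ((cmod (w {u,v}))^2)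
      (mu_poly (S - {u} - {v}) (induced_edges E (S - {u} - {v})) w))"
    using u by (intro sum.cong refl) (auto simp: N_def B_def t_def sum_matching_term_insert_edge[OF fin])
  finally show ?thesis
    by (simp add: N_def sum_negf)
qed

definition outside_weight :: "'a set \<Rightarrow> ('a \<Rightarrow> real) \<Rightarrow> 'a set \<Rightarrow> real" where
  "outside_weight V w1 S = (-1) ^ card (V - S) * (\<Prod>v\<in>V - S. w1 v)"

lemma eta_poly_eq_sum_outside_weight:
  "eta_poly V E w w1 = (\<Sum>S\<in>Pow V. smult (outside_weight V w1 S) (mu_poly S (induced_edges E S) w))"
  by (simp add: eta_poly_def outside_weight_def)

lemma outside_weight_insert_outside:
  assumes "finite V" "u \<notin> V" "S \<subseteq> V"
  shows "outside_weight (insert u V) w1 S = - w1 u * outside_weight V w1 S"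
proof -
  have "insert u V - S = insert u (V - S)" using assms by auto
  then show ?thesis using assms by (simp add: outside_weight_def)
qed

lemma outside_weight_insert_inside:
  assumes "u \<notin> V"
  shows "outside_weight (insert u V) w1 (insert u S) = outside_weight V w1 S"
proof -
  have "insert u V - insert u S = V - S" using assms by auto
  then show ?thesis by (simp add: outside_weight_def)
qed

lemma sum_Pow_sum_member_eq_sum_eta_poly:
  fixes c :: "'a \<Rightarrow> real"
  assumes fin: "finite V" and N: "N \<subseteq> V"
  shows "(\<Sum>T\<in>Pow V. \<Sum>v\<in>{v\<in>N. v \<in> T}.
      smult (outside_weight V w1 T * c v) (mu_poly (T - {v}) (induced_edges E (T - {v})) w))
    = (\<Sum>v\<in>N. smult (c v) (eta_poly (V - {v}) E w w1))"
proof -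
  have "(\<Sum>T\<in>Pow V. \<Sum>v\<in>{v\<in>N. v \<in> T}.
      smult (outside_weight V w1 T * c v) (mu_poly (T - {v}) (induced_edges E (T - {v})) w))
    = (\<Sum>v\<in>N. \<Sum>T\<in>{T\<in>Pow V. v \<in> T}.
      smult (outside_weight V w1 T * c v) (mu_poly (T - {v}) (induced_edges E (T - {v})) w))"
    by (rule sum.swap_restrict) (use fin N in \<open>auto intro: finite_subset\<close>)
  also have "\<dots> = (\<Sum>v\<in>N. smult (c v) (eta_poly (V - {v}) E w w1))"
  proof (rule sum.cong[OF refl])
    fix v assume "v \<in> N"
    then have v: "v \<in> V" using N by blast
    have R: "outside_weight V w1 (insert v R) = outside_weight (V - {v}) w1 R"
      "insert v R - {v} = R" "R - {v} = R" if "R \<subseteq> V - {v}" for R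
      using that outside_weight_insert_inside[of v "V - {v}" w1 R] v by (auto simp: insert_absorb)
    show "(\<Sum>T\<in>{T\<in>Pow V. v \<in> T}.
        smult (outside_weight V w1 T * c v) (mu_poly (T - {v}) (induced_edges E (T - {v})) w))
      = smult (c v) (eta_poly (V - {v}) E w w1)"
      unfolding sum_Pow_containing[OF v] eta_poly_eq_sum_outside_weight smult_sum_right
      by (intro sum.cong refl) (simp add: R mult.commute)
  qed
  finally show ?thesis .
qed

lemma eta_poly_vertex_recurrence:
  assumes fin: "finite V" and u: "u \<in> V" and E2: "\<forall>e\<in>E. card e = 2"
  shows "eta_poly V E w w1 = [:- w1 u, 1:] * eta_poly (V - {u}) E w w1
    - (\<Sum>v\<in>{v\<in>V - {u}. {u,v} \<in> E}. smult ((cmod (w {u,v}))^2) (eta_poly (V - {u} - {v}) E w w1))"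
proof -
  define V' where "V' = V - {u}"
  define N where "N = {v\<in>V'. {u,v} \<in> E}"
  define mu where "mu S = mu_poly S (induced_edges E S) w" for S
  define c where "c v = (cmod (w {u,v}))^2" for v
  have fin': "finite V'" and u': "u \<notin> V'" and V: "V = insert u V'" and N: "N \<subseteq> V'"
    using fin u by (auto simp: V'_def N_def)
  have mu_insert: "mu (insert u T) = [:0,1:] * mu T - (\<Sum>v\<in>{v\<in>N. v \<in> T}. smult (c v) (mu (T - {v})))"
    if "T \<in> Pow V'" for T
  proof -
    have "finite (insert u T)" "u \<notin> T" using that fin' finite_subset u' by auto
    moreover have "{v\<in>T. {u,v} \<in> E} = {v\<in>N. v \<in> T}" using that by (auto simp: N_def)
    ultimately show ?thesis
      unfolding mu_def c_def using mu_poly_vertex_recurrence[of "insert u T" u E w] E2 by simp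
  qed
  have "eta_poly V E w w1 = (\<Sum>S\<in>Pow V'. smult (outside_weight V w1 S) (mu S))
      + (\<Sum>T\<in>Pow V'. smult (outside_weight V w1 (insert u T)) (mu (insert u T)))"
    unfolding eta_poly_eq_sum_outside_weight V mu_def using fin' u' by (rule sum_Pow_insert)
  also have "(\<Sum>S\<in>Pow V'. smult (outside_weight V w1 S) (mu S)) = smult (- w1 u) (eta_poly V' E w w1)"
    unfolding eta_poly_eq_sum_outside_weight smult_sum_right V mu_def
    using fin' u' by (intro sum.cong refl) (simp add: outside_weight_insert_outside)
  also have "(\<Sum>T\<in>Pow V'. smult (outside_weight V w1 (insert u T)) (mu (insert u T)))
      = (\<Sum>T\<in>Pow V'. [:0,1:] * smult (outside_weight V' w1 T) (mu T)
          - (\<Sum>v\<in>{v\<in>N. v \<in> T}. smult (outside_weight V' w1 T * c v) (mu (T - {v}))))"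
    using outside_weight_insert_inside[OF u']
    by (intro sum.cong refl) (simp add: V mu_insert smult_diff_right smult_sum_right)
  also have "\<dots> = [:0,1:] * eta_poly V' E w w1
      - (\<Sum>T\<in>Pow V'. \<Sum>v\<in>{v\<in>N. v \<in> T}. smult (outside_weight V' w1 T * c v) (mu (T - {v})))"
    by (simp add: sum_subtractf eta_poly_eq_sum_outside_weight sum_distrib_left mu_def)
  also have "(\<Sum>T\<in>Pow V'. \<Sum>v\<in>{v\<in>N. v \<in> T}. smult (outside_weight V' w1 T * c v) (mu (T - {v})))
      = (\<Sum>v\<in>N. smult (c v) (eta_poly (V' - {v}) E w w1))"
    unfolding mu_def by (rule sum_Pow_sum_member_eq_sum_eta_poly[OF fin' N])
  finally show ?thesis
    by (simp add: V'_def N_def c_def algebra_simps)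
qed

lemma eta_poly_empty:
  assumes "\<forall>e\<in>E. card e = 2"
  shows "eta_poly {} E w w1 = 1"
proof -
  have "induced_edges E {} = {}" using assms by (force simp: induced_edges_def)
  moreover have "{M. matching ({}::'a set set) M} = {{}}" by (auto simp: matching_def)
  ultimately show ?thesis by (simp add: eta_poly_def mu_poly_def)
qed

lemma eta_poly_degree_le_and_coeff:
  assumes "finite V" "\<forall>e\<in>E. card e = 2"
  shows "degree (eta_poly V E w w1) \<le> card V \<and> coeff (eta_poly V E w w1) (card V) = 1"
  using assms(1)
proof (induction "card V" arbitrary: V rule: less_induct)
  case less
  show ?case
  proof (cases "V = {}")
    case True
    then show ?thesis using eta_poly_empty[OF assms(2)] by simp
  next
    case False
    then obtain u where u: "u \<in> V" by blast
    define n where "n = card V"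
    define f where "f = eta_poly (V - {u}) E w w1"
    define S where "S = (\<Sum>v\<in>{v\<in>V - {u}. {u,v} \<in> E}.
      smult ((cmod (w {u,v}))^2) (eta_poly (V - {u} - {v}) E w w1))"
    have n: "n = Suc (card (V - {u}))" using card_Suc_Diff1[OF less.prems u] by (simp add: n_def)
    have f: "degree f \<le> n - 1" "coeff f (n - 1) = 1"
      using less.hyps[of "V - {u}"] less.prems n by (simp_all add: f_def n_def)
    have "degree (eta_poly (V - {u} - {v}) E w w1) \<le> n - 1" if v: "v \<in> V - {u}" for v
    proof -
      have "card (V - {u} - {v}) < card V" "card (V - {u} - {v}) \<le> n - 1"
        using n v less.prems by (auto simp: n_def)
      then show ?thesis using less.hyps[of "V - {u} - {v}"] less.prems by fastforce
    qed
    then have "degree S \<le> n - 1"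
      unfolding S_def by (intro degree_sum_le) (use less.prems in \<open>auto intro: order.trans[OF degree_smult_le]\<close>)
    then have S: "degree S < n" "coeff S n = 0" using n by (simp_all add: coeff_eq_0)
    have "degree ([:- w1 u, 1:] * f) \<le> n"
      using f n by (auto intro!: degree_diff_le order.trans[OF degree_pCons_le]
          order.trans[OF degree_smult_le])
    moreover have "coeff ([:- w1 u, 1:] * f) n = 1"
      using f n by (simp add: coeff_eq_0)
    moreover have "eta_poly V E w w1 = [:- w1 u, 1:] * f - S"
      unfolding f_def S_def by (rule eta_poly_vertex_recurrence[OF less.prems u assms(2)])
    ultimately show ?thesis
      using S by (simp add: n_def[symmetric] degree_diff_le)
  qed
qed

lemma eta_poly_nonzero:
  assumes "finite V" "\<forall>e\<in>E. card e = 2"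
  shows "eta_poly V E w w1 \<noteq> 0"
  using eta_poly_degree_le_and_coeff[OF assms, of w w1] by auto

definition vertex_wronskian :: "'a set \<Rightarrow> 'a set set \<Rightarrow> ('a set \<Rightarrow> complex) \<Rightarrow> ('a \<Rightarrow> real) \<Rightarrow> 'a \<Rightarrow> real poly"
  where "vertex_wronskian V E w w1 u =
    eta_poly (V - {u}) E w w1 * pderiv (eta_poly V E w w1)
    - eta_poly V E w w1 * pderiv (eta_poly (V - {u}) E w w1)"

lemma vertex_wronskian_recurrence:
  assumes fin: "finite V" and u: "u \<in> V" and E2: "\<forall>e\<in>E. card e = 2"
  shows "vertex_wronskian V E w w1 u = (eta_poly (V - {u}) E w w1)^2
     + (\<Sum>v\<in>{v\<in>V - {u}. {u,v} \<in> E}. smult ((cmod (w {u,v}))^2) (vertex_wronskian (V - {u}) E w w1 v))"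
proof -
  define N where "N = {v\<in>V - {u}. {u,v} \<in> E}"
  define c where "c v = (cmod (w {u,v}))^2" for v
  define f where "f = eta_poly (V - {u}) E w w1"
  define g where "g = eta_poly V E w w1"
  define h where "h v = eta_poly (V - {u} - {v}) E w w1" for v
  define L where "L = [:- w1 u, 1:]"
  define S where "S = (\<Sum>v\<in>N. smult (c v) (h v))"
  define S' where "S' = (\<Sum>v\<in>N. smult (c v) (pderiv (h v)))"
  have g: "g = L * f - S"
    unfolding g_def L_def f_def S_def N_def c_def h_def by (rule eta_poly_vertex_recurrence[OF fin u E2])
  then have g': "pderiv g = L * pderiv f + f - S'"
    by (simp add: S_def S'_def pderiv_diff pderiv_mult pderiv_sum pderiv_smult L_def pderiv_pCons)
  have "vertex_wronskian V E w w1 u = f * pderiv g - g * pderiv f"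
    by (simp add: vertex_wronskian_def f_def g_def)
  also have "\<dots> = f * (L * pderiv f + f - S') - (L * f - S) * pderiv f"
    unfolding g' by (simp only: g)
  also have "\<dots> = f^2 + (S * pderiv f - f * S')"
    by (simp add: algebra_simps power2_eq_square)
  also have "S * pderiv f - f * S' = (\<Sum>v\<in>N. smult (c v) (h v * pderiv f - f * pderiv (h v)))"
    by (simp add: S_def S'_def smult_diff_right sum_subtractf sum_distrib_left sum_distrib_right)
  finally show ?thesis
    by (simp add: vertex_wronskian_def N_def c_def f_def h_def)
qed

lemma vertex_wronskian_nonneg:
  assumes "finite V" "u \<in> V" "\<forall>e\<in>E. card e = 2"
  shows "poly (vertex_wronskian V E w w1 u) x \<ge> 0"
  using assms(1,2)
proof (induction "card V" arbitrary: V u rule: less_induct)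
  case less
  have "poly (vertex_wronskian (V - {u}) E w w1 v) x \<ge> 0" if "v \<in> V - {u}" for v
    using less.hyps[of "V - {u}" v] less.prems that card_Diff1_less[OF less.prems] by auto
  then show ?case
    unfolding vertex_wronskian_recurrence[OF less.prems assms(3)]
    by (auto simp: poly_sum intro!: add_nonneg_nonneg sum_nonneg mult_nonneg_nonneg)
qed

lemma order_eta_poly_le_delete_vertex:
  assumes fin: "finite V" and u: "u \<in> V" and E2: "\<forall>e\<in>E. card e = 2"
  shows "order t (eta_poly V E w w1) \<le> order t (eta_poly (V - {u}) E w w1) + 1"
proof (rule ccontr)
  define f where "f = eta_poly (V - {u}) E w w1"
  define g where "g = eta_poly V E w w1"
  define R where "R = (\<Sum>v\<in>{v\<in>V - {u}. {u,v} \<in> E}.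
    smult ((cmod (w {u,v}))^2) (vertex_wronskian (V - {u}) E w w1 v))"
  define p where "p = [:-t,1:]"
  define k where "k = order t f"
  define m where "m = order t g"
  assume "\<not> m \<le> k + 1"
  then have le: "2 * k + 1 \<le> k + (m - 1)" "2 * k + 1 \<le> m + (k - 1)" by linarith+
  have f: "p ^ k dvd f" and g: "p ^ m dvd g"
    by (simp_all add: p_def k_def m_def order_1)
  have "p ^ (2 * k + 1) dvd f * pderiv g - g * pderiv f"
    using dvd_trans[OF le_imp_power_dvd[OF le(1)] mult_dvd_mono[OF f power_dvd_pderiv[OF g], folded power_add]]
      dvd_trans[OF le_imp_power_dvd[OF le(2)] mult_dvd_mono[OF g power_dvd_pderiv[OF f], folded power_add]]
    by (rule dvd_diff)
  also have "f * pderiv g - g * pderiv f = f^2 + R"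
    unfolding f_def g_def R_def vertex_wronskian_recurrence[OF fin u E2, symmetric]
    by (simp add: vertex_wronskian_def)
  finally have "[:-t,1:] ^ (2 * order t f + 1) dvd f^2 + R"
    by (simp add: p_def k_def)
  moreover have "f \<noteq> 0" unfolding f_def using fin E2 by (simp add: eta_poly_nonzero)
  moreover have "poly R x \<ge> 0" for x
    unfolding R_def using vertex_wronskian_nonneg[OF _ _ E2] fin
    by (auto simp: poly_sum intro!: sum_nonneg mult_nonneg_nonneg)
  ultimately show False
    using not_power_dvd_square_plus_nonneg by blast
qed

lemma order_eta_poly_delete_vertex_le:
  assumes fin: "finite V" and u: "u \<in> V" and E2: "\<forall>e\<in>E. card e = 2"
  shows "order t (eta_poly (V - {u}) E w w1) \<le> order t (eta_poly V E w w1) + 1"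
proof -
  define k where "k = order t (eta_poly (V - {u}) E w w1)"
  have "[:-t,1:] ^ (k - 1) dvd eta_poly (V - {u}) E w w1"
    by (simp add: k_def order_divides)
  moreover have "[:-t,1:] ^ (k - 1) dvd eta_poly (V - {u} - {v}) E w w1" if "v \<in> V - {u}" for v
    using order_eta_poly_le_delete_vertex[of "V - {u}" v E t w w1] fin E2 that
    by (simp add: k_def order_divides) arith
  ultimately have "[:-t,1:] ^ (k - 1) dvd eta_poly V E w w1"
    unfolding eta_poly_vertex_recurrence[OF fin u E2]
    by (intro dvd_diff dvd_mult dvd_sum dvd_smult) auto
  then show ?thesis
    using eta_poly_nonzero[OF fin E2] by (simp add: k_def order_divides)
qed

lemma eta_poly_delete_vertex_edges:
  assumes "u \<notin> V"
  shows "eta_poly V (delete_vertex_edges E u) w w1 = eta_poly V E w w1"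
proof -
  have "induced_edges (delete_vertex_edges E u) S = induced_edges E S" if "S \<subseteq> V" for S
    using assms that by (auto simp: induced_edges_def delete_vertex_edges_def)
  then show ?thesis
    unfolding eta_poly_def by (intro sum.cong refl) simp
qed

text \<open>The weights enter only through \<open>|w e|^2\<close>.\<close>

theorem lemma4p2:
  fixes V :: "'a set" and E :: "'a set set" and w :: "'a set \<Rightarrow> complex"
    and w1 :: "'a \<Rightarrow> real" and u :: 'a and \<theta> :: real
  assumes "simple_graph V E"
    and "\<forall>e\<in>E. w e \<noteq> 0"
    and "u \<in> V"
  shows "int (mult \<theta> V E w w1) - 1 \<le> int (mult \<theta> (V - {u}) (delete_vertex_edges E u) w w1)
       \<and> int (mult \<theta> (V - {u}) (delete_vertex_edges E u) w w1) \<le> int (mult \<theta> V E w w1) + 1"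
proof -
  have fin: "finite V" and E2: "\<forall>e\<in>E. card e = 2"
    using assms(1) by (auto simp: simple_graph_def)
  have delete: "eta_poly (V - {u}) (delete_vertex_edges E u) w w1 = eta_poly (V - {u}) E w w1"
    by (rule eta_poly_delete_vertex_edges) simp
  show ?thesis
    using order_eta_poly_le_delete_vertex[OF fin assms(3) E2, of \<theta> w w1]
      order_eta_poly_delete_vertex_le[OF fin assms(3) E2, of \<theta> w w1]
    unfolding mult_def delete by linarith
qed

end
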